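(* Let $n\ge 2$, let $T=\{1,\dots,n\}$ and let $\mathcal T$ be a topology on $T$. Fix an integer $k\ge 1$. Let $A,R\subseteq T\setminus\{n\}$ be disjoint sets such that every point of $A$ is old (at stage $k$), every point of $R$ is new (at stage $k$), $R\neq\emptyset$, and $A\cup R$ is a new upper $k$-system of $\mathcal T$. Then $A$ is open in $\mathcal T$.
   Context: For $\alpha\in T$, $\alpha^{*}$ (the covering set of $\alpha$) denotes the smallest open set of $\mathcal T$ containing $\alpha$. For an integer $m\ge 0$, an $m$-system is an open set $P$ of $\mathcal T$ such that $P\setminus\{n\}$ has exactly $m$ points; it is upper if $n\notin P$ and lower if $n\in P$. For fixed $k$, a point $\alpha\neq n$ is called old if $\alpha^{*}$ is an $m$-system for some $m<k$, and new if $\alpha^{*}$ is a $k$-system. A $k$-system is called new if it contains at least one point $p\neq n$ that is not contained in any $m$-system with $m\le k-1$. *)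

theory Defs
  imports "HOL-Analysis.Analysis"
begin

text \<open>Finite topological space on T = {1..n}, represented by X :: nat topology
  with topspace X = {1..n}. The distinguished point is n.\<close>

definition covering_set :: "nat topology \<Rightarrow> nat \<Rightarrow> nat set" where
  "covering_set X a = \<Inter> {U. openin X U \<and> a \<in> U}"

definition m_system :: "nat topology \<Rightarrow> nat \<Rightarrow> nat \<Rightarrow> nat set \<Rightarrow> bool" where
  "m_system X n m P \<longleftrightarrow> openin X P \<and> finite (P - {n}) \<and> card (P - {n}) = m"

definition upper_system :: "nat topology \<Rightarrow> nat \<Rightarrow> nat \<Rightarrow> nat set \<Rightarrow> bool" where
  "upper_system X n m P \<longleftrightarrow> m_system X n m P \<and> n \<notin> P"

definition lower_system :: "nat topology \<Rightarrow> nat \<Rightarrow> nat \<Rightarrow> nat set \<Rightarrow> bool" where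
  "lower_system X n m P \<longleftrightarrow> m_system X n m P \<and> n \<in> P"

definition old_point :: "nat topology \<Rightarrow> nat \<Rightarrow> nat \<Rightarrow> nat \<Rightarrow> bool" where
  "old_point X n k a \<longleftrightarrow> a \<noteq> n \<and> (\<exists>m<k. m_system X n m (covering_set X a))"

definition new_point :: "nat topology \<Rightarrow> nat \<Rightarrow> nat \<Rightarrow> nat \<Rightarrow> bool" where
  "new_point X n k a \<longleftrightarrow> a \<noteq> n \<and> m_system X n k (covering_set X a)"

definition new_system :: "nat topology \<Rightarrow> nat \<Rightarrow> nat \<Rightarrow> nat set \<Rightarrow> bool" where
  "new_system X n k P \<longleftrightarrow> m_system X n k P \<and>
     (\<exists>p\<in>P. p \<noteq> n \<and> \<not> (\<exists>m Q. m \<le> k - 1 \<and> m_system X n m Q \<and> p \<in> Q))"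

end

theory Submission
  imports Defs
begin

(* The covering set of an old point a has fewer than k points other than n, and it contains the
   covering set of each of its points; so no new point lies in it. Since A \<union> R is open, the
   covering set of a \<in> A lies in A \<union> R, hence in A, and A is the union of these open sets. *)

lemma covering_set_subset_open: "openin X U \<Longrightarrow> a \<in> U \<Longrightarrow> covering_set X a \<subseteq> U"
  unfolding covering_set_def by blast

lemma mem_covering_set: "a \<in> topspace X \<Longrightarrow> a \<in> covering_set X a"
  unfolding covering_set_def by auto

lemma m_system_card_mono:
  assumes "m_system X n m P" and "m_system X n m' Q" and "Q \<subseteq> P"
  shows "m' \<le> m"
proof -
  have "Q - {n} \<subseteq> P - {n}" using assms(3) by blast
  then show ?thesis
    using assms(1,2) card_mono[of "P - {n}" "Q - {n}"] by (simp add: m_system_def)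
qed

lemma new_point_notin_covering_set_old_point:
  assumes "old_point X n k a" and "new_point X n k r"
  shows "r \<notin> covering_set X a"
proof
  assume r: "r \<in> covering_set X a"
  obtain m where "m < k" and old: "m_system X n m (covering_set X a)"
    using assms(1) by (auto simp: old_point_def)
  have new: "m_system X n k (covering_set X r)"
    using assms(2) by (simp add: new_point_def)
  have "covering_set X r \<subseteq> covering_set X a"
    using old r by (intro covering_set_subset_open) (simp_all add: m_system_def)
  with old new have "k \<le> m" by (rule m_system_card_mono)
  with \<open>m < k\<close> show False by simp
qed

lemma openin_if_covering_sets_inside:
  assumes "A \<subseteq> topspace X"
    and "\<And>a. a \<in> A \<Longrightarrow> openin X (covering_set X a)"
    and "\<And>a. a \<in> A \<Longrightarrow> covering_set X a \<subseteq> A"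
  shows "openin X A"
proof -
  have "A = (\<Union>a\<in>A. covering_set X a)"
    using assms(1,3) mem_covering_set by blast
  moreover have "openin X (\<Union>a\<in>A. covering_set X a)"
    using assms(2) by (intro openin_Union) auto
  ultimately show ?thesis by simp
qed

theorem lemma1:
  fixes X :: "nat topology" and n k :: nat and A R :: "nat set"
  assumes "n \<ge> 2"
    and "topspace X = {1..n}"
    and "k \<ge> 1"
    and "A \<subseteq> {1..n} - {n}" and "R \<subseteq> {1..n} - {n}"
    and "A \<inter> R = {}"
    and "\<forall>a\<in>A. old_point X n k a"
    and "\<forall>r\<in>R. new_point X n k r"
    and "R \<noteq> {}"
    and "upper_system X n k (A \<union> R)"
    and "new_system X n k (A \<union> R)"
  shows "openin X A"
proof (rule openin_if_covering_sets_inside)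
  show "A \<subseteq> topspace X" using assms(2,4) by blast
next
  fix a assume "a \<in> A"
  then show "openin X (covering_set X a)"
    using assms(7) by (auto simp: old_point_def m_system_def)
  have "covering_set X a \<subseteq> A \<union> R"
    using assms(10) \<open>a \<in> A\<close>
    by (intro covering_set_subset_open) (auto simp: upper_system_def m_system_def)
  moreover have "r \<notin> covering_set X a" if "r \<in> R" for r
    using assms(7,8) \<open>a \<in> A\<close> \<open>r \<in> R\<close> by (blast dest: new_point_notin_covering_set_old_point)
  ultimately show "covering_set X a \<subseteq> A" by blast
qed

end
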